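(* Let $G$ be the direct sum of groups $\langle a_n\rangle$, $n\in\omega$, each of order $2$. Then $(a_n)_{n\in\omega}$ is a $T$-sequence on $G$, and the canonical bijection $F\mapsto\sum_{i\in F}a_i$ from the Hamming space $\mathbb{H}$ onto $(G,\mathcal{C}_{\tau(a_n)})$ is an asymorphism.
   Context: A sequence $(a_n)$ in an abelian group $G$ is a $T$-sequence if there is a Hausdorff group topology on $G$ in which $(a_n)\to0$; $\tau(a_n)$ is the strongest group topology on $G$ in which $(a_n)\to0$, and $\mathcal{C}_{\tau(a_n)}$ is the group ideal of precompact subsets of $(G,\tau(a_n))$, defining the coarse structure with base $\{\{(x,y):x\in A+y\}:A\in\mathcal{C}_{\tau(a_n)}\}$. The Hamming space $\mathbb{H}$ is the set of finite subsets of $\omega$ with metric $h(F,H)=|F\triangle H|$, with coarse structure generated by $\{(x,y):h(x,y)\le r\}$, $r\ge 0$. An asymorphism is a bijection $f$ such that $f$ and $f^{-1}$ are macro-uniform, where $f:(X,\mathcal{E})\to(X',\mathcal{E}')$ is macro-uniform if for each $E\in\mathcal{E}$ there is $E'\in\mathcal{E}'$ with $f(E[x])\subseteq E'[f(x)]$ for all $x$. *)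

theory Defs
  imports "HOL-Analysis.Analysis" "HOL-Library.Z2" "HOL-Library.Function_Algebras"
begin

text \<open>The group G = direct sum of countably many copies of Z/2, realised as the
finitely supported functions nat => bit with pointwise addition.\<close>

definition Gset :: "(nat \<Rightarrow> bit) set" where
  "Gset = {g. finite {n. g n \<noteq> 0}}"

definition gen :: "nat \<Rightarrow> (nat \<Rightarrow> bit)" where
  "gen n = (\<lambda>k. if k = n then 1 else 0)"

definition group_topology :: "'a::ab_group_add set \<Rightarrow> 'a topology \<Rightarrow> bool" where
  "group_topology S T \<longleftrightarrow> topspace T = S \<and>
     continuous_map (prod_topology T T) T (\<lambda>(x, y). x + y) \<and>
     continuous_map T T uminus"

definition is_T_sequence :: "'a::ab_group_add set \<Rightarrow> (nat \<Rightarrow> 'a) \<Rightarrow> bool" where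
  "is_T_sequence S a \<longleftrightarrow> (\<exists>T. group_topology S T \<and> Hausdorff_space T \<and> limitin T a 0 sequentially)"

definition strongest_topology :: "'a::ab_group_add set \<Rightarrow> (nat \<Rightarrow> 'a) \<Rightarrow> 'a topology" where
  "strongest_topology S a = (THE T. group_topology S T \<and> limitin T a 0 sequentially \<and>
      (\<forall>T'. group_topology S T' \<and> limitin T' a 0 sequentially \<longrightarrow>
            (\<forall>U. openin T' U \<longrightarrow> openin T U)))"

definition precompact_in :: "'a::ab_group_add set \<Rightarrow> 'a topology \<Rightarrow> 'a set \<Rightarrow> bool" where
  "precompact_in S T A \<longleftrightarrow> A \<subseteq> S \<and>
     (\<forall>U. openin T U \<and> 0 \<in> U \<longrightarrow>
        (\<exists>F. finite F \<and> F \<subseteq> S \<and> A \<subseteq> {f + u | f u. f \<in> F \<and> u \<in> U}))"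

definition group_coarse :: "'a::ab_group_add set \<Rightarrow> 'a topology \<Rightarrow> ('a \<times> 'a) set set" where
  "group_coarse S T = {E. \<exists>A. precompact_in S T A \<and>
      E \<subseteq> {(x, y). x \<in> S \<and> y \<in> S \<and> x \<in> (\<lambda>z. z + y) ` A}}"

definition Hset :: "nat set set" where
  "Hset = {F. finite F}"

definition hamming :: "nat set \<Rightarrow> nat set \<Rightarrow> nat" where
  "hamming F H = card ((F - H) \<union> (H - F))"

definition hamming_coarse :: "(nat set \<times> nat set) set set" where
  "hamming_coarse = {E. \<exists>r::real. r \<ge> 0 \<and>
      E \<subseteq> {(x, y). x \<in> Hset \<and> y \<in> Hset \<and> real (hamming x y) \<le> r}}"

definition macro_uniform ::
  "'a set \<Rightarrow> ('a \<times> 'a) set set \<Rightarrow> ('b \<times> 'b) set set \<Rightarrow> ('a \<Rightarrow> 'b) \<Rightarrow> bool" where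
  "macro_uniform X EE EE' f \<longleftrightarrow>
     (\<forall>E\<in>EE. \<exists>E'\<in>EE'. \<forall>x\<in>X. f ` (E `` {x}) \<subseteq> E' `` {f x})"

definition asymorphism ::
  "'a set \<Rightarrow> ('a \<times> 'a) set set \<Rightarrow> 'b set \<Rightarrow> ('b \<times> 'b) set set \<Rightarrow> ('a \<Rightarrow> 'b) \<Rightarrow> bool" where
  "asymorphism X EE Y EE' f \<longleftrightarrow> bij_betw f X Y \<and>
     macro_uniform X EE EE' f \<and> macro_uniform Y EE' EE (inv_into X f)"

end

theory Submission
  imports Defs
begin

text \<open>For \<open>m :: nat \<Rightarrow> nat\<close> let \<open>thin m\<close> be the set of \<open>g\<close> whose support meets
  every \<open>[0, m k)\<close> in at most \<open>k\<close> points. The translates of these sets generate a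
  Hausdorff group topology in which \<open>gen n \<rightarrow> 0\<close>, and it is the finest one: given a
  neighbourhood \<open>V\<close> of \<open>0\<close> in any such topology, choose neighbourhoods \<open>V = V 0, V 1, \<dots>\<close>
  with \<open>V (k + 1) + V (k + 1) \<subseteq> V k\<close> and thresholds \<open>m k\<close> beyond which
  \<open>gen n \<in> V (k + 1)\<close>; adding up the generators of an element of \<open>thin m\<close> from the
  smallest index on shows \<open>thin m \<subseteq> V\<close>.
  A set is precompact for this topology iff the sizes of the supports of its elements are
  bounded, so the precompact coarse structure is given by the support size of \<open>x + y\<close>,
  which is the Hamming distance of the supports of \<open>x\<close> and \<open>y\<close>.\<close>

section \<open>Finite sets of naturals as a Boolean group\<close>

definition supp :: "(nat \<Rightarrow> bit) \<Rightarrow> nat set" where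
  "supp g = {n. g n \<noteq> 0}"

definition weight :: "(nat \<Rightarrow> bit) \<Rightarrow> nat" where
  "weight g = card (supp g)"

lemma bit_add_eq_0_iff: "(x::bit) + y = 0 \<longleftrightarrow> x = y"
  by (cases x; cases y) auto

lemma fun_bit_add_self [simp]: "(g::nat \<Rightarrow> bit) + g = 0"
  by (simp add: fun_eq_iff)

lemma fun_bit_add_cancel_left [simp]: "(g::nat \<Rightarrow> bit) + (g + h) = h"
  by (simp flip: add.assoc)

lemma fun_bit_add_cancel_right [simp]: "(g::nat \<Rightarrow> bit) + h + h = g"
  by (simp add: add.assoc)

lemma fun_bit_add_eq_0_iff: "(g::nat \<Rightarrow> bit) + h = 0 \<longleftrightarrow> g = h"
  by (metis fun_bit_add_cancel_left fun_bit_add_self add_0_right)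

lemma supp_add: "supp (g + h) = (supp g - supp h) \<union> (supp h - supp g)"
  by (auto simp: supp_def bit_add_eq_0_iff)

lemma Gset_iff_finite_supp: "g \<in> Gset \<longleftrightarrow> finite (supp g)"
  by (simp add: Gset_def supp_def)

lemma zero_in_Gset [simp]: "0 \<in> Gset"
  by (simp add: Gset_iff_finite_supp supp_def)

lemma Gset_add: "g \<in> Gset \<Longrightarrow> h \<in> Gset \<Longrightarrow> g + h \<in> Gset"
  by (simp add: Gset_iff_finite_supp supp_add)

lemma sum_gen_apply: "finite F \<Longrightarrow> (\<Sum>i\<in>F. gen i) n = (if n \<in> F then 1 else 0)"
  by (induction F rule: finite_induct) (auto simp: gen_def)

lemma supp_sum_gen [simp]: "finite F \<Longrightarrow> supp (\<Sum>i\<in>F. gen i) = F"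
  by (simp add: supp_def sum_gen_apply)

lemma sum_gen_in_Gset: "finite F \<Longrightarrow> (\<Sum>i\<in>F. gen i) \<in> Gset"
  by (simp add: Gset_iff_finite_supp)

lemma sum_gen_supp: "g \<in> Gset \<Longrightarrow> (\<Sum>i\<in>supp g. gen i) = g"
  by (rule ext) (auto simp: sum_gen_apply Gset_iff_finite_supp supp_def)

lemma bij_betw_sum_gen: "bij_betw (\<lambda>F. \<Sum>i\<in>F. gen i) Hset Gset"
proof (rule bij_betw_byWitness[where f' = supp])
  show "(\<lambda>F. \<Sum>i\<in>F. gen i) ` Hset \<subseteq> Gset" "supp ` Gset \<subseteq> Hset"
    by (auto simp: Hset_def Gset_iff_finite_supp)
qed (auto simp: Hset_def sum_gen_supp)

lemma inv_into_sum_gen: "g \<in> Gset \<Longrightarrow> inv_into Hset (\<lambda>F. \<Sum>i\<in>F. gen i) g = supp g"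
  using bij_betw_sum_gen
  by (intro inv_into_f_eq) (auto simp: bij_betw_def Hset_def Gset_iff_finite_supp sum_gen_supp)

lemma hamming_supp: "hamming (supp g) (supp h) = weight (g + h)"
  by (simp add: hamming_def weight_def supp_add)

lemma hamming_eq_weight_sum_gen:
  "finite F \<Longrightarrow> finite H \<Longrightarrow> hamming F H = weight ((\<Sum>i\<in>F. gen i) + (\<Sum>i\<in>H. gen i))"
  by (metis hamming_supp supp_sum_gen)

section \<open>Neighbourhoods of zero in group topologies\<close>

lemma group_topology_translate_continuous:
  assumes T: "group_topology S T" and x: "x \<in> S"
  shows "continuous_map T T ((+) x)"
proof -
  have "continuous_map T (prod_topology T T) (\<lambda>g. (x, g))"
    using T x by (simp add: continuous_map_paired group_topology_def)
  moreover have "continuous_map (prod_topology T T) T (\<lambda>(x, y). x + y)"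
    using T by (simp add: group_topology_def)
  ultimately have "continuous_map T T ((\<lambda>(x, y). x + y) \<circ> (\<lambda>g. (x, g)))"
    by (rule continuous_map_compose)
  then show ?thesis by (simp add: o_def)
qed

lemma group_topology_half_nhd:
  assumes T: "group_topology S T" and V: "openin T V" "0 \<in> V"
  obtains V' where "openin T V'" "0 \<in> V'" "\<And>a b. a \<in> V' \<Longrightarrow> b \<in> V' \<Longrightarrow> a + b \<in> V"
proof -
  let ?P = "{p \<in> topspace (prod_topology T T). (case p of (x, y) \<Rightarrow> x + y) \<in> V}"
  have "openin (prod_topology T T) ?P"
    using T V(1) unfolding group_topology_def by (blast intro: openin_continuous_map_preimage)
  moreover have "0 \<in> topspace T"
    using openin_subset[OF V(1)] V(2) by (rule subsetD)
  then have "(0, 0) \<in> ?P"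
    using V(2) by simp
  ultimately obtain U1 U2 where U: "openin T U1" "openin T U2" "0 \<in> U1" "0 \<in> U2" "U1 \<times> U2 \<subseteq> ?P"
    unfolding openin_prod_topology_alt by meson
  show thesis
  proof (rule that[of "U1 \<inter> U2"])
    show "openin T (U1 \<inter> U2)" using U(1,2) by (rule openin_Int)
    show "0 \<in> U1 \<inter> U2" using U(3,4) by (rule IntI)
    show "a + b \<in> V" if "a \<in> U1 \<inter> U2" "b \<in> U1 \<inter> U2" for a b
    proof -
      have "(a, b) \<in> U1 \<times> U2" using that by simp
      with U(5) have "(a, b) \<in> ?P" by (rule subsetD)
      then show ?thesis by simp
    qed
  qed
qed

lemma group_topology_halving_chain:
  assumes T: "group_topology S T" and V: "openin T V" "0 \<in> V"
  obtains Vs where "Vs 0 = V" "\<And>k. openin T (Vs k)" "\<And>k. 0 \<in> Vs k"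
    "\<And>k a b. a \<in> Vs (Suc k) \<Longrightarrow> b \<in> Vs (Suc k) \<Longrightarrow> a + b \<in> Vs k"
proof -
  define half where "half V = (SOME V'. openin T V' \<and> 0 \<in> V' \<and> (\<forall>a\<in>V'. \<forall>b\<in>V'. a + b \<in> V))"
    for V
  have half: "openin T (half V) \<and> 0 \<in> half V \<and> (\<forall>a\<in>half V. \<forall>b\<in>half V. a + b \<in> V)"
    if "openin T V" "0 \<in> V" for V
    unfolding half_def by (rule someI_ex) (metis group_topology_half_nhd[OF T that])
  define Vs where "Vs = rec_nat V (\<lambda>_. half)"
  have Vs_Suc: "Vs (Suc k) = half (Vs k)" for k by (simp add: Vs_def)
  have Vs_nhd: "openin T (Vs k) \<and> 0 \<in> Vs k" for k
    by (induction k) (simp_all add: Vs_def V half)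
  show thesis
  proof (rule that)
    show "Vs 0 = V" by (simp add: Vs_def)
    show "openin T (Vs k)" "0 \<in> Vs k" for k
      using Vs_nhd by auto
    show "a + b \<in> Vs k" if "a \<in> Vs (Suc k)" "b \<in> Vs (Suc k)" for k a b
      using that half[OF Vs_nhd[of k, THEN conjunct1] Vs_nhd[of k, THEN conjunct2]]
      by (simp add: Vs_Suc)
  qed
qed

text \<open>If \<open>a n \<in> Vs (Suc i)\<close> for \<open>n \<ge> m i\<close>, then a sum over a set meeting each
  \<open>[0, m (k + i))\<close> in at most \<open>i\<close> points lies in \<open>Vs k\<close>: peel off the least index,
  which is at least \<open>m k\<close>, and recurse one level deeper on the rest.\<close>

lemma sum_in_halving_chain:
  fixes a :: "nat \<Rightarrow> 'a::ab_group_add"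
  assumes add: "\<And>k x y. x \<in> Vs (Suc k) \<Longrightarrow> y \<in> Vs (Suc k) \<Longrightarrow> x + y \<in> Vs k"
    and zero: "\<And>k. 0 \<in> Vs k"
    and tail: "\<And>i n. m i \<le> n \<Longrightarrow> a n \<in> Vs (Suc i)"
    and S: "finite S" "\<And>i. card (S \<inter> {..<m (k + i)}) \<le> i"
  shows "sum a S \<in> Vs k"
  using S
proof (induction "card S" arbitrary: S k)
  case 0
  then show ?case using zero by simp
next
  case (Suc n)
  define s where "s = Min S"
  have "S \<noteq> {}" using Suc.hyps(2) by auto
  then have s: "s \<in> S" "\<And>t. t \<in> S \<Longrightarrow> s \<le> t"
    using Suc.prems(1) by (simp_all add: s_def)
  define S' where "S' = S - {s}"
  have "card (S \<inter> {..<m k}) = 0" using Suc.prems(2)[of 0] by simp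
  then have "m k \<le> s" using Suc.prems(1) s(1) by auto
  then have "a s \<in> Vs (Suc k)" by (rule tail)
  moreover have "sum a S' \<in> Vs (Suc k)"
  proof (rule Suc.hyps(1))
    show "n = card S'" "finite S'" using Suc.hyps(2) Suc.prems(1) s(1) by (simp_all add: S'_def)
    show "card (S' \<inter> {..<m (Suc k + i)}) \<le> i" for i
    proof (cases "s < m (Suc k + i)")
      case True
      then have "S \<inter> {..<m (k + Suc i)} = insert s (S' \<inter> {..<m (Suc k + i)})"
        using s(1) by (auto simp: S'_def)
      moreover have "finite (S' \<inter> {..<m (Suc k + i)})" "s \<notin> S'"
        using Suc.prems(1) by (simp_all add: S'_def)
      ultimately have "card (S \<inter> {..<m (k + Suc i)}) = Suc (card (S' \<inter> {..<m (Suc k + i)}))"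
        by simp
      then show ?thesis using Suc.prems(2)[of "Suc i"] by simp
    next
      case False
      then have "S' \<inter> {..<m (Suc k + i)} = {}" using s(2) by (force simp: S'_def)
      then show ?thesis by simp
    qed
  qed
  moreover have "sum a S = a s + sum a S'"
    using Suc.prems(1) s(1) by (simp add: S'_def sum.remove)
  ultimately show ?case using add by simp
qed

section \<open>The strongest group topology in which the generators converge\<close>

definition thin :: "(nat \<Rightarrow> nat) \<Rightarrow> (nat \<Rightarrow> bit) set" where
  "thin m = {g \<in> Gset. \<forall>k. card (supp g \<inter> {..<m k}) \<le> k}"

lemma thin_subset_Gset: "thin m \<subseteq> Gset"
  by (auto simp: thin_def)

lemma zero_in_thin [simp]: "0 \<in> thin m"
  by (simp add: thin_def supp_def)

lemma thin_antimono:
  assumes "\<And>k. m k \<le> m' k"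
  shows "thin m' \<subseteq> thin m"
proof
  fix g assume g: "g \<in> thin m'"
  then have "finite (supp g)" by (simp add: thin_def Gset_iff_finite_supp)
  then have "card (supp g \<inter> {..<m k}) \<le> card (supp g \<inter> {..<m' k})" for k
    using assms[of k] by (intro card_mono) auto
  with g show "g \<in> thin m" by (auto simp: thin_def intro: le_trans)
qed

definition halve :: "(nat \<Rightarrow> nat) \<Rightarrow> nat \<Rightarrow> nat" where
  "halve m j = Max (m ` {..2 * j + 1})"

text \<open>Since \<open>m k \<le> halve m (k div 2)\<close>, each summand has at most \<open>k div 2\<close> support
  points below \<open>m k\<close>.\<close>

lemma thin_halve_add:
  assumes g: "g \<in> thin (halve m)" and h: "h \<in> thin (halve m)"
  shows "g + h \<in> thin m"
proof -
  have fin: "finite (supp g)" "finite (supp h)"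
    using g h by (auto simp: thin_def Gset_iff_finite_supp)
  have "card (supp (g + h) \<inter> {..<m k}) \<le> k" for k
  proof -
    define j where "j = k div 2"
    have m_le: "m k \<le> halve m j"
      unfolding halve_def j_def by (rule Max_ge) auto
    have bound: "card (supp f \<inter> {..<m k}) \<le> j" if "finite (supp f)" "f \<in> thin (halve m)" for f
    proof -
      have "card (supp f \<inter> {..<m k}) \<le> card (supp f \<inter> {..<halve m j})"
        using that(1) m_le by (intro card_mono) auto
      also have "\<dots> \<le> j" using that(2) by (simp add: thin_def)
      finally show ?thesis .
    qed
    have "card (supp (g + h) \<inter> {..<m k}) \<le> card (supp g \<inter> {..<m k} \<union> supp h \<inter> {..<m k})"
      using fin by (intro card_mono) (auto simp: supp_add)
    also have "\<dots> \<le> card (supp g \<inter> {..<m k}) + card (supp h \<inter> {..<m k})"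
      by (rule card_Un_le)
    also have "\<dots> \<le> j + j" using bound fin g h by (meson add_mono)
    finally show ?thesis unfolding j_def by linarith
  qed
  with g h show ?thesis
    using thin_subset_Gset by (auto simp: thin_def intro: Gset_add)
qed

lemma gen_in_thin: "m 0 \<le> n \<Longrightarrow> gen n \<in> thin m"
proof -
  assume n: "m 0 \<le> n"
  have supp_gen: "supp (gen n) = {n}" by (simp add: supp_def gen_def)
  have "card ({n} \<inter> {..<m k}) \<le> k" for k
    using n by (cases k) (auto simp: Int_insert_left)
  then show ?thesis by (simp add: thin_def supp_gen Gset_iff_finite_supp)
qed

definition thin_topology :: "(nat \<Rightarrow> bit) topology" where
  "thin_topology = topology (\<lambda>U. U \<subseteq> Gset \<and> (\<forall>x\<in>U. \<exists>m. (+) x ` thin m \<subseteq> U))"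

lemma istopology_thin:
  "istopology (\<lambda>U. U \<subseteq> Gset \<and> (\<forall>x\<in>U. \<exists>m. (+) x ` thin m \<subseteq> U))"
proof -
  define P where "P U \<longleftrightarrow> U \<subseteq> Gset \<and> (\<forall>x\<in>U. \<exists>m. (+) x ` thin m \<subseteq> U)" for U
  have "P (S \<inter> T)" if S: "P S" and T: "P T" for S T
  proof -
    have "\<exists>m. (+) x ` thin m \<subseteq> S \<inter> T" if x: "x \<in> S \<inter> T" for x
    proof -
      obtain m1 m2 where "(+) x ` thin m1 \<subseteq> S" "(+) x ` thin m2 \<subseteq> T"
        using S T x unfolding P_def by blast
      moreover have "thin (\<lambda>k. max (m1 k) (m2 k)) \<subseteq> thin m1 \<inter> thin m2"
        using thin_antimono[of m1 "\<lambda>k. max (m1 k) (m2 k)"]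
          thin_antimono[of m2 "\<lambda>k. max (m1 k) (m2 k)"] by auto
      ultimately show ?thesis by blast
    qed
    with S show ?thesis unfolding P_def by blast
  qed
  moreover have "P (\<Union>K)" if "\<forall>S\<in>K. P S" for K
    using that unfolding P_def by (meson Union_iff Union_least Union_upper subset_trans)
  ultimately have "istopology P" unfolding istopology_def by blast
  then show ?thesis by (simp add: P_def [abs_def])
qed

lemma openin_thin_topology:
  "openin thin_topology U \<longleftrightarrow> U \<subseteq> Gset \<and> (\<forall>x\<in>U. \<exists>m. (+) x ` thin m \<subseteq> U)"
  unfolding thin_topology_def using istopology_thin by simp

lemma translate_thin_subset_Gset: "x \<in> Gset \<Longrightarrow> (+) x ` thin m \<subseteq> Gset"
  using thin_subset_Gset by (auto intro: Gset_add)

lemma topspace_thin_topology [simp]: "topspace thin_topology = Gset"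
proof
  show "topspace thin_topology \<subseteq> Gset"
    using openin_topspace[of thin_topology] unfolding openin_thin_topology by (rule conjunct1)
  have "openin thin_topology Gset"
    by (simp add: openin_thin_topology translate_thin_subset_Gset)
  then show "Gset \<subseteq> topspace thin_topology"
    by (rule openin_subset)
qed

text \<open>The translates \<open>x + thin m\<close> need not be open, but by \<open>thin_halve_add\<close>
  the points \<open>y\<close> with some \<open>y + thin m'\<close> inside \<open>x + thin m\<close> form an open set.\<close>

lemma in_interior_translate_thin:
  assumes x: "x \<in> Gset"
  shows "x \<in> thin_topology interior_of ((+) x ` thin m)"
proof -
  define I where "I = {y \<in> Gset. \<exists>m'. (+) y ` thin m' \<subseteq> (+) x ` thin m}"
  have "openin thin_topology I"
    unfolding openin_thin_topology
  proof (intro conjI ballI)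
    show "I \<subseteq> Gset" by (auto simp: I_def)
    fix z assume "z \<in> I"
    then obtain m' where m': "(+) z ` thin m' \<subseteq> (+) x ` thin m" and z: "z \<in> Gset"
      by (auto simp: I_def)
    have "z + w \<in> I" if w: "w \<in> thin (halve m')" for w
    proof -
      have "z + w + v \<in> (+) z ` thin m'" if "v \<in> thin (halve m')" for v
        using thin_halve_add[OF w that] by (simp add: add.assoc)
      then have "(+) (z + w) ` thin (halve m') \<subseteq> (+) x ` thin m"
        using m' by blast
      moreover have "z + w \<in> Gset"
        using z w thin_subset_Gset by (blast intro: Gset_add)
      ultimately show ?thesis by (auto simp: I_def)
    qed
    then show "\<exists>m''. (+) z ` thin m'' \<subseteq> I" by blast
  qed
  moreover have "I \<subseteq> (+) x ` thin m"
    using zero_in_thin by (force simp: I_def)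
  moreover have "x \<in> I" using x by (auto simp: I_def)
  ultimately show ?thesis by (meson interior_of_maximal subsetD)
qed

lemma mem_interior_translate_thinE:
  assumes "p \<in> thin_topology interior_of ((+) a ` thin m)"
  obtains v where "p = a + v" "v \<in> thin m"
  using subsetD[OF interior_of_subset assms] by (rule imageE)

lemma group_topology_thin: "group_topology Gset thin_topology"
  unfolding group_topology_def
proof (intro conjI)
  have "(uminus :: (nat \<Rightarrow> bit) \<Rightarrow> _) = id" by (simp add: fun_eq_iff)
  then show "continuous_map thin_topology thin_topology uminus" by simp
  show "continuous_map (prod_topology thin_topology thin_topology) thin_topology (\<lambda>(x, y). x + y)"
    unfolding continuous_map openin_prod_topology_alt topspace_prod_topology topspace_thin_topology
  proof (intro conjI allI impI)
    fix U a b
    assume U: "openin thin_topology U"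
      and "(a, b) \<in> {p \<in> Gset \<times> Gset. (case p of (x, y) \<Rightarrow> x + y) \<in> U}"
    then have a: "a \<in> Gset" and b: "b \<in> Gset" and "a + b \<in> U" by auto
    then obtain m where m: "(+) (a + b) ` thin m \<subseteq> U"
      using U by (auto simp: openin_thin_topology)
    let ?N = "\<lambda>x. thin_topology interior_of ((+) x ` thin (halve m))"
    have "p + q \<in> U" if p: "p \<in> ?N a" and q: "q \<in> ?N b" for p q
    proof -
      obtain v w where v: "p = a + v" "v \<in> thin (halve m)" and w: "q = b + w" "w \<in> thin (halve m)"
        using p q by (elim mem_interior_translate_thinE)
      have "p + q = (a + b) + (v + w)"
        by (simp only: v(1) w(1) ac_simps)
      moreover have "v + w \<in> thin m"
        using v(2) w(2) by (rule thin_halve_add)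
      ultimately show ?thesis using m by blast
    qed
    moreover have "?N x \<subseteq> Gset" for x
      using interior_of_subset_topspace[of thin_topology] by simp
    ultimately have "?N a \<times> ?N b \<subseteq> {p \<in> Gset \<times> Gset. (case p of (x, y) \<Rightarrow> x + y) \<in> U}"
      by (auto simp: subset_iff)
    moreover have "a \<in> ?N a" "b \<in> ?N b"
      using in_interior_translate_thin[OF a] in_interior_translate_thin[OF b] .
    ultimately show "\<exists>U' V'. openin thin_topology U' \<and> openin thin_topology V' \<and>
        a \<in> U' \<and> b \<in> V' \<and> U' \<times> V' \<subseteq> {p \<in> Gset \<times> Gset. (case p of (x, y) \<Rightarrow> x + y) \<in> U}"
      by (intro exI[of _ "?N a"] exI[of _ "?N b"]) simp
  qed (auto intro: Gset_add)
qed simp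

lemma Hausdorff_thin_topology: "Hausdorff_space thin_topology"
  unfolding Hausdorff_space_def topspace_thin_topology
proof (intro allI impI)
  fix x y assume xy: "x \<in> Gset \<and> y \<in> Gset \<and> x \<noteq> y"
  then obtain n where n: "x n \<noteq> y n" by blast
  define m where "m = (\<lambda>_::nat. Suc n)"
  let ?N = "\<lambda>x. thin_topology interior_of ((+) x ` thin (halve m))"
  have "disjnt (?N x) (?N y)"
  proof (rule ccontr)
    assume "\<not> disjnt (?N x) (?N y)"
    then obtain z where zx: "z \<in> ?N x" and zy: "z \<in> ?N y"
      unfolding disjnt_def by blast
    obtain v w where v: "z = x + v" "v \<in> thin (halve m)" and w: "z = y + w" "w \<in> thin (halve m)"
      using zx zy by (elim mem_interior_translate_thinE)
    have "(x + y) + (v + w) = (x + v) + (y + w)"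
      by (simp only: ac_simps)
    also have "\<dots> = 0"
      by (simp only: v(1)[symmetric] w(1)[symmetric] fun_bit_add_self)
    finally have "x + y = v + w"
      by (rule fun_bit_add_eq_0_iff[THEN iffD1])
    with thin_halve_add[OF v(2) w(2)] have "\<forall>k. card (supp (x + y) \<inter> {..<m k}) \<le> k"
      by (simp add: thin_def)
    from this[rule_format, of 0] have "card (supp (x + y) \<inter> {..<Suc n}) = 0"
      by (simp add: m_def)
    then have "supp (x + y) \<inter> {..<Suc n} = {}"
      using Gset_add[of x y] xy by (simp add: Gset_iff_finite_supp)
    moreover have "n \<in> supp (x + y)"
      using n by (simp only: supp_def mem_Collect_eq plus_fun_apply bit_add_eq_0_iff not_False_eq_True)
    ultimately show False by blast
  qed
  moreover have "openin thin_topology (?N x)" "openin thin_topology (?N y)"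
    by simp_all
  moreover have "x \<in> ?N x" "y \<in> ?N y"
    using xy in_interior_translate_thin by simp_all
  ultimately show "\<exists>U V. openin thin_topology U \<and> openin thin_topology V \<and>
      x \<in> U \<and> y \<in> V \<and> disjnt U V"
    by blast
qed

lemma gen_tendsto_0_thin_topology: "limitin thin_topology gen 0 sequentially"
  unfolding limitin_def eventually_sequentially
proof (intro conjI allI impI)
  fix U assume "openin thin_topology U \<and> 0 \<in> U"
  then obtain m where "(+) 0 ` thin m \<subseteq> U" by (auto simp: openin_thin_topology)
  then have "gen n \<in> U" if "m 0 \<le> n" for n
    using gen_in_thin[of m n, OF that] by auto
  then show "\<exists>N. \<forall>n\<ge>N. gen n \<in> U" by blast
qed simp

lemma thin_subset_nhd:
  assumes T: "group_topology Gset T" and lim: "limitin T gen 0 sequentially"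
    and V: "openin T V" "0 \<in> V"
  obtains m where "thin m \<subseteq> V"
proof -
  obtain Vs where Vs: "Vs 0 = V" "\<And>k. openin T (Vs k)" "\<And>k. 0 \<in> Vs k"
    "\<And>k a b. a \<in> Vs (Suc k) \<Longrightarrow> b \<in> Vs (Suc k) \<Longrightarrow> a + b \<in> Vs k"
    using group_topology_halving_chain[OF T V] by blast
  have "\<exists>N. \<forall>n\<ge>N. gen n \<in> Vs (Suc i)" for i
    using lim Vs(2,3) unfolding limitin_def eventually_sequentially by blast
  then obtain m where m: "\<And>i n. m i \<le> n \<Longrightarrow> gen n \<in> Vs (Suc i)"
    by metis
  have "g \<in> V" if g: "g \<in> thin m" for g
  proof -
    have "sum gen (supp g) \<in> Vs 0"
      using g by (intro sum_in_halving_chain[of Vs m]) (auto simp: Vs m thin_def Gset_iff_finite_supp)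
    moreover have "sum gen (supp g) = g"
      using subsetD[OF thin_subset_Gset g] by (rule sum_gen_supp)
    ultimately show ?thesis using Vs(1) by simp
  qed
  then show thesis by (intro that subsetI)
qed

lemma openin_thin_topology_if_gen_tendsto_0:
  assumes T: "group_topology Gset T" and lim: "limitin T gen 0 sequentially"
    and U: "openin T U"
  shows "openin thin_topology U"
  unfolding openin_thin_topology
proof (intro conjI ballI)
  have top: "topspace T = Gset" using T by (simp add: group_topology_def)
  then show U_Gset: "U \<subseteq> Gset" using openin_subset[OF U] by simp
  fix x assume x: "x \<in> U"
  let ?V = "{g \<in> topspace T. x + g \<in> U}"
  have "x \<in> Gset" using U_Gset x by (rule subsetD)
  have "openin T ?V"
    using group_topology_translate_continuous[OF T \<open>x \<in> Gset\<close>] U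
    by (rule openin_continuous_map_preimage)
  moreover have "0 \<in> ?V" using x top by simp
  ultimately obtain m where "thin m \<subseteq> ?V" using thin_subset_nhd[OF T lim] by metis
  then show "\<exists>m. (+) x ` thin m \<subseteq> U" by auto
qed

lemma strongest_topology_Gset_gen: "strongest_topology Gset gen = thin_topology"
  unfolding strongest_topology_def
proof (rule the_equality)
  show "group_topology Gset thin_topology \<and> limitin thin_topology gen 0 sequentially \<and>
      (\<forall>T'. group_topology Gset T' \<and> limitin T' gen 0 sequentially \<longrightarrow>
         (\<forall>U. openin T' U \<longrightarrow> openin thin_topology U))"
    using group_topology_thin gen_tendsto_0_thin_topology openin_thin_topology_if_gen_tendsto_0
    by blast
next
  fix T assume "group_topology Gset T \<and> limitin T gen 0 sequentially \<and>
      (\<forall>T'. group_topology Gset T' \<and> limitin T' gen 0 sequentially \<longrightarrow>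
         (\<forall>U. openin T' U \<longrightarrow> openin T U))"
  then have "openin T U \<longleftrightarrow> openin thin_topology U" for U
    using group_topology_thin gen_tendsto_0_thin_topology openin_thin_topology_if_gen_tendsto_0
    by blast
  then show "T = thin_topology" by (simp add: topology_eq)
qed

section \<open>Precompact sets and the coarse structure\<close>

text \<open>Split \<open>g\<close> into its part below \<open>N = max {m 0, \<dots>, m r}\<close>, one of finitely many
  sums over subsets of \<open>{..<N}\<close>, and its part above \<open>N\<close>, which lies in \<open>thin m\<close>.\<close>

lemma precompact_weight_ball: "precompact_in Gset thin_topology {g \<in> Gset. weight g \<le> r}"
  unfolding precompact_in_def
proof (intro conjI allI impI)
  fix U assume "openin thin_topology U \<and> 0 \<in> U"
  then obtain m where thin_U: "thin m \<subseteq> U" by (force simp: openin_thin_topology)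
  define N where "N = Max (m ` {..r})"
  define F where "F = (\<lambda>S. \<Sum>i\<in>S. gen i) ` Pow {..<N}"
  have "g \<in> {f + u |f u. f \<in> F \<and> u \<in> U}" if g: "g \<in> Gset" "weight g \<le> r" for g
  proof -
    have fin: "finite (supp g)" using g(1) by (simp add: Gset_iff_finite_supp)
    define H where "H = supp g - {..<N}"
    have "g = (\<Sum>i\<in>supp g \<inter> {..<N}. gen i) + (\<Sum>i\<in>H. gen i)"
    proof -
      have "supp g \<inter> {..<N} \<union> H = supp g"
        unfolding H_def by blast
      then have "g = (\<Sum>i\<in>(supp g \<inter> {..<N}) \<union> H. gen i)"
        using sum_gen_supp[OF g(1)] by simp
      also have "\<dots> = (\<Sum>i\<in>supp g \<inter> {..<N}. gen i) + (\<Sum>i\<in>H. gen i)"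
        using fin by (intro sum.union_disjoint) (auto simp: H_def)
      finally show ?thesis .
    qed
    moreover have "(\<Sum>i\<in>supp g \<inter> {..<N}. gen i) \<in> F" by (auto simp: F_def)
    moreover have "(\<Sum>i\<in>H. gen i) \<in> thin m"
    proof -
      have "card (H \<inter> {..<m k}) \<le> k" for k
      proof (cases "k \<le> r")
        case True
        then have "m k \<le> N" unfolding N_def by (intro Max_ge) auto
        then have "H \<inter> {..<m k} = {}" unfolding H_def by auto
        then show ?thesis by simp
      next
        case False
        have "card (H \<inter> {..<m k}) \<le> card (supp g)"
          using fin by (intro card_mono) (auto simp: H_def)
        with g(2) False show ?thesis by (simp add: weight_def)
      qed
      moreover have "finite H" using fin by (simp add: H_def)
      ultimately show ?thesis by (simp add: thin_def sum_gen_in_Gset)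
    qed
    ultimately show ?thesis using thin_U by blast
  qed
  moreover have "finite F" "F \<subseteq> Gset"
    by (auto simp: F_def intro: sum_gen_in_Gset finite_subset)
  ultimately show "\<exists>F. finite F \<and> F \<subseteq> Gset \<and>
      {g \<in> Gset. weight g \<le> r} \<subseteq> {f + u |f u. f \<in> F \<and> u \<in> U}"
    by blast
qed auto

text \<open>Conversely, if \<open>A\<close> had unbounded weight, choose \<open>m k\<close> so that some element of \<open>A\<close>
  has more than \<open>2k\<close> support points below \<open>m k\<close>. Translating the neighbourhood \<open>thin m\<close>
  by finitely many \<open>f\<close> of weight at most \<open>K\<close> only reaches elements with at most \<open>2K\<close>
  support points below \<open>m K\<close>.\<close>

lemma precompact_imp_weight_bounded:
  assumes A: "precompact_in Gset thin_topology A"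
  obtains r where "\<And>g. g \<in> A \<Longrightarrow> weight g \<le> r"
proof -
  have "\<exists>r. \<forall>g\<in>A. weight g \<le> r"
  proof (rule ccontr)
    assume unbounded: "\<nexists>r. \<forall>g\<in>A. weight g \<le> r"
    have "\<exists>M. \<exists>a\<in>A. 2 * k < card (supp a \<inter> {..<M})" for k
    proof -
      obtain a where a: "a \<in> A" "2 * k < weight a"
        using unbounded not_le by blast
      then have "finite (supp a)"
        using A by (auto simp: precompact_in_def Gset_iff_finite_supp)
      then have "supp a \<inter> {..<Suc (Max (supp a))} = supp a"
        by (auto simp: less_Suc_eq_le)
      with a(2) have "2 * k < card (supp a \<inter> {..<Suc (Max (supp a))})"
        by (simp add: weight_def)
      with a(1) show ?thesis by blast
    qed
    then obtain m where m: "\<And>k. \<exists>a\<in>A. 2 * k < card (supp a \<inter> {..<m k})"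
      by metis
    let ?N = "thin_topology interior_of thin m"
    have "openin thin_topology ?N" "0 \<in> ?N"
      using in_interior_translate_thin[of 0 m] by simp_all
    then obtain F where F: "finite F" "F \<subseteq> Gset" "A \<subseteq> {f + u |f u. f \<in> F \<and> u \<in> ?N}"
      using A unfolding precompact_in_def by blast
    define K where "K = Max (insert 0 (weight ` F))"
    obtain a where a: "a \<in> A" "2 * K < card (supp a \<inter> {..<m K})"
      using m by blast
    have "a \<in> {f + u |f u. f \<in> F \<and> u \<in> ?N}" using F(3) a(1) by (rule subsetD)
    then obtain f u where fu: "a = f + u" "f \<in> F" "u \<in> ?N"
      by blast
    have u: "u \<in> thin m" using fu(3) by (rule subsetD[OF interior_of_subset])
    have fin: "finite (supp f)" "finite (supp u)"
      using subsetD[OF F(2) fu(2)] subsetD[OF thin_subset_Gset u]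
      by (simp_all add: Gset_iff_finite_supp)
    have "card (supp a \<inter> {..<m K}) \<le> card (supp u \<inter> {..<m K} \<union> supp f)"
      using fin by (intro card_mono) (auto simp: fu(1) supp_add)
    also have "\<dots> \<le> card (supp u \<inter> {..<m K}) + weight f"
      unfolding weight_def by (rule card_Un_le)
    also have "card (supp u \<inter> {..<m K}) \<le> K"
      using u by (simp add: thin_def)
    also have "weight f \<le> K"
      unfolding K_def using F(1) fu(2) by (intro Max_ge) auto
    finally show False using a(2) by simp
  qed
  then show thesis using that by blast
qed

lemma group_coarse_thin_topology:
  "group_coarse Gset thin_topology =
     {E. \<exists>r. E \<subseteq> {(x, y). x \<in> Gset \<and> y \<in> Gset \<and> weight (x + y) \<le> r}}"
proof (intro equalityI subsetI CollectI)
  fix E assume "E \<in> group_coarse Gset thin_topology"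
  then obtain A where A: "precompact_in Gset thin_topology A"
    and E: "E \<subseteq> {(x, y). x \<in> Gset \<and> y \<in> Gset \<and> x \<in> (\<lambda>z. z + y) ` A}"
    unfolding group_coarse_def by blast
  obtain r where r: "\<And>g. g \<in> A \<Longrightarrow> weight g \<le> r"
    using precompact_imp_weight_bounded[OF A] by blast
  have "weight (x + y) \<le> r" if "x \<in> (\<lambda>z. z + y) ` A" for x y
  proof -
    from that obtain a where "x = a + y" "a \<in> A" by (rule imageE)
    then show ?thesis using r by simp
  qed
  with E show "\<exists>r. E \<subseteq> {(x, y). x \<in> Gset \<and> y \<in> Gset \<and> weight (x + y) \<le> r}"
    by blast
next
  fix E assume "E \<in> {E. \<exists>r. E \<subseteq> {(x, y). x \<in> Gset \<and> y \<in> Gset \<and> weight (x + y) \<le> r}}"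
  then obtain r where E: "E \<subseteq> {(x, y). x \<in> Gset \<and> y \<in> Gset \<and> weight (x + y) \<le> r}"
    by blast
  have "x \<in> (\<lambda>z. z + y) ` {g \<in> Gset. weight g \<le> r}"
    if "x \<in> Gset" "y \<in> Gset" "weight (x + y) \<le> r" for x y
    using that by (intro image_eqI[of _ _ "x + y"]) (simp_all add: Gset_add)
  with E precompact_weight_ball show "E \<in> group_coarse Gset thin_topology"
    unfolding group_coarse_def by blast
qed

lemma macro_uniform_cong:
  assumes "\<And>E. E \<in> EE \<Longrightarrow> E \<subseteq> X \<times> X" and "\<And>x. x \<in> X \<Longrightarrow> f x = g x"
  shows "macro_uniform X EE EE' f \<longleftrightarrow> macro_uniform X EE EE' g"
proof -
  have "f ` (E `` {x}) = g ` (E `` {x})" if "E \<in> EE" for E x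
    using assms that by (intro image_cong) auto
  then show ?thesis unfolding macro_uniform_def using assms(2) by (metis (no_types, lifting))
qed

lemma macro_uniform_sum_gen:
  "macro_uniform Hset hamming_coarse (group_coarse Gset thin_topology) (\<lambda>F. \<Sum>i\<in>F. gen i)"
  unfolding macro_uniform_def group_coarse_thin_topology
proof
  fix E assume "E \<in> hamming_coarse"
  then obtain r :: real where r: "E \<subseteq> {(x, y). x \<in> Hset \<and> y \<in> Hset \<and> real (hamming x y) \<le> r}"
    by (auto simp: hamming_coarse_def)
  let ?E' = "{(x, y). x \<in> Gset \<and> y \<in> Gset \<and> weight (x + y) \<le> nat \<lceil>r\<rceil>}"
  have "(\<Sum>i\<in>F. gen i, \<Sum>i\<in>H. gen i) \<in> ?E'" if "(F, H) \<in> E" for F H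
  proof -
    have "finite F" "finite H" "real (hamming F H) \<le> r"
      using r that by (auto simp: Hset_def)
    then show ?thesis
      by (auto simp: sum_gen_in_Gset hamming_eq_weight_sum_gen le_nat_iff intro: le_ceiling_iff[THEN iffD2])
  qed
  then show "\<exists>E'\<in>{E. \<exists>r. E \<subseteq> {(x, y). x \<in> Gset \<and> y \<in> Gset \<and> weight (x + y) \<le> r}}.
      \<forall>F\<in>Hset. (\<lambda>F. \<Sum>i\<in>F. gen i) ` (E `` {F}) \<subseteq> E' `` {\<Sum>i\<in>F. gen i}"
    by blast
qed

lemma macro_uniform_supp:
  "macro_uniform Gset (group_coarse Gset thin_topology) hamming_coarse supp"
  unfolding macro_uniform_def group_coarse_thin_topology
proof
  fix E assume "E \<in> {E. \<exists>r. E \<subseteq> {(x, y). x \<in> Gset \<and> y \<in> Gset \<and> weight (x + y) \<le> r}}"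
  then obtain r where r: "E \<subseteq> {(x, y). x \<in> Gset \<and> y \<in> Gset \<and> weight (x + y) \<le> r}"
    by blast
  let ?E' = "{(F, H). F \<in> Hset \<and> H \<in> Hset \<and> real (hamming F H) \<le> real r}"
  have "?E' \<in> hamming_coarse"
    unfolding hamming_coarse_def by (intro CollectI exI[of _ "real r"]) auto
  moreover have "(supp x, supp y) \<in> ?E'" if "(x, y) \<in> E" for x y
    using r that by (auto simp: Hset_def Gset_iff_finite_supp hamming_supp)
  ultimately show "\<exists>E'\<in>hamming_coarse. \<forall>x\<in>Gset. supp ` (E `` {x}) \<subseteq> E' `` {supp x}"
    by blast
qed

theorem mainTheorem10:
  shows "is_T_sequence Gset gen \<and>
    asymorphism Hset hamming_coarse Gset (group_coarse Gset (strongest_topology Gset gen))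
      (\<lambda>F. \<Sum>i\<in>F. gen i)"
proof
  show "is_T_sequence Gset gen"
    unfolding is_T_sequence_def
    using group_topology_thin Hausdorff_thin_topology gen_tendsto_0_thin_topology by blast
  have "macro_uniform Gset (group_coarse Gset thin_topology) hamming_coarse
      (inv_into Hset (\<lambda>F. \<Sum>i\<in>F. gen i))"
    using macro_uniform_supp
    by (subst macro_uniform_cong[where g = supp])
      (auto simp: inv_into_sum_gen group_coarse_def)
  then show "asymorphism Hset hamming_coarse Gset
      (group_coarse Gset (strongest_topology Gset gen)) (\<lambda>F. \<Sum>i\<in>F. gen i)"
    unfolding asymorphism_def strongest_topology_Gset_gen
    using bij_betw_sum_gen macro_uniform_sum_gen by blast
qed

end
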